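(* Let $(X,*,0)$ be a solid weak BCC-algebra and define $x\wedge y=y*(y*x)$. Then the following are equivalent: (1) $X$ is branchwise commutative; (2) for each $a\in I(X)$, the branch $B(a)$ is a semilattice with respect to the operation $\wedge$; (3) $A(x)\cap A(y)=A(x\wedge y)$ for all $x,y$ belonging to the same branch.
   Context: A weak BCC-algebra is a set $X$ with a binary operation $*$ and a constant $0$ satisfying, for all $x,y,z\in X$: (i) $((x*y)*(z*y))*(x*z)=0$; (ii) $x*x=0$; (iii) $x*0=x$; (iv) $x*y=y*x=0$ implies $x=y$. The relation $x\leqslant y$ iff $x*y=0$ is a partial order on $X$. Let $I(X)$ be the set of minimal elements of $X$ with respect to $\leqslant$. For $a\in I(X)$ the branch initiated by $a$ is $B(a)=\{x\in X: a\leqslant x\}$; "belonging to the same branch" means lying in a common $B(a)$. For $b\in X$, the initial part is $A(b)=\{x\in X: x\leqslant b\}$. A weak BCC-algebra is called (left) solid if $(x*y)*z=(x*z)*y$ holds for all $x,y$ belonging to the same branch and all $z\in X$. It is called branchwise commutative if $x*(x*y)=y*(y*x)$ holds for all $x,y$ belonging to the same branch. *)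

theory Defs
  imports Main
begin

text \<open>Weak BCC-algebra (X, *, 0) on a carrier set X; the operation is m and the constant is z.\<close>

definition weak_BCC :: "'a set \<Rightarrow> ('a \<Rightarrow> 'a \<Rightarrow> 'a) \<Rightarrow> 'a \<Rightarrow> bool" where
  "weak_BCC X m z \<longleftrightarrow>
     z \<in> X \<and> (\<forall>x\<in>X. \<forall>y\<in>X. m x y \<in> X) \<and>
     (\<forall>x\<in>X. \<forall>y\<in>X. \<forall>w\<in>X. m (m (m x y) (m w y)) (m x w) = z) \<and>
     (\<forall>x\<in>X. m x x = z) \<and>
     (\<forall>x\<in>X. m x z = x) \<and>
     (\<forall>x\<in>X. \<forall>y\<in>X. m x y = z \<and> m y x = z \<longrightarrow> x = y)"

definition bcc_le :: "('a \<Rightarrow> 'a \<Rightarrow> 'a) \<Rightarrow> 'a \<Rightarrow> 'a \<Rightarrow> 'a \<Rightarrow> bool" where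
  "bcc_le m z x y \<longleftrightarrow> m x y = z"

definition minimal_elems :: "'a set \<Rightarrow> ('a \<Rightarrow> 'a \<Rightarrow> 'a) \<Rightarrow> 'a \<Rightarrow> 'a set" where
  "minimal_elems X m z = {a \<in> X. \<forall>x\<in>X. bcc_le m z x a \<longrightarrow> x = a}"

definition branch :: "'a set \<Rightarrow> ('a \<Rightarrow> 'a \<Rightarrow> 'a) \<Rightarrow> 'a \<Rightarrow> 'a \<Rightarrow> 'a set" where
  "branch X m z a = {x \<in> X. bcc_le m z a x}"

definition initial_part :: "'a set \<Rightarrow> ('a \<Rightarrow> 'a \<Rightarrow> 'a) \<Rightarrow> 'a \<Rightarrow> 'a \<Rightarrow> 'a set" where
  "initial_part X m z b = {x \<in> X. bcc_le m z x b}"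

definition same_branch :: "'a set \<Rightarrow> ('a \<Rightarrow> 'a \<Rightarrow> 'a) \<Rightarrow> 'a \<Rightarrow> 'a \<Rightarrow> 'a \<Rightarrow> bool" where
  "same_branch X m z x y \<longleftrightarrow>
     (\<exists>a\<in>minimal_elems X m z. x \<in> branch X m z a \<and> y \<in> branch X m z a)"

definition solid :: "'a set \<Rightarrow> ('a \<Rightarrow> 'a \<Rightarrow> 'a) \<Rightarrow> 'a \<Rightarrow> bool" where
  "solid X m z \<longleftrightarrow> weak_BCC X m z \<and>
     (\<forall>x\<in>X. \<forall>y\<in>X. \<forall>w\<in>X. same_branch X m z x y \<longrightarrow> m (m x y) w = m (m x w) y)"

definition branchwise_commutative :: "'a set \<Rightarrow> ('a \<Rightarrow> 'a \<Rightarrow> 'a) \<Rightarrow> 'a \<Rightarrow> bool" where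
  "branchwise_commutative X m z \<longleftrightarrow>
     (\<forall>x\<in>X. \<forall>y\<in>X. same_branch X m z x y \<longrightarrow> m x (m x y) = m y (m y x))"

definition bcc_meet :: "('a \<Rightarrow> 'a \<Rightarrow> 'a) \<Rightarrow> 'a \<Rightarrow> 'a \<Rightarrow> 'a" where
  "bcc_meet m x y = m y (m y x)"

definition semilattice_on :: "'a set \<Rightarrow> ('a \<Rightarrow> 'a \<Rightarrow> 'a) \<Rightarrow> bool" where
  "semilattice_on S f \<longleftrightarrow>
     (\<forall>x\<in>S. \<forall>y\<in>S. f x y \<in> S) \<and>
     (\<forall>x\<in>S. f x x = x) \<and>
     (\<forall>x\<in>S. \<forall>y\<in>S. f x y = f y x) \<and>
     (\<forall>x\<in>S. \<forall>y\<in>S. \<forall>w\<in>S. f (f x y) w = f x (f y w))"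

end

theory Submission
  imports Defs
begin

text \<open>
  In a solid weak BCC-algebra the meet \<open>x \<and> y = y * (y * x)\<close> of two elements of a branch is
  always a lower bound of \<open>y\<close> and lies in the same branch.  Branchwise commutativity makes it a
  lower bound of \<open>x\<close> as well, and even the greatest one: if \<open>u \<le> x, y\<close>, then commutativity of
  \<open>u, y\<close> gives \<open>u = y * (y * u)\<close>, which lies below \<open>y * (y * x)\<close> because \<open>*\<close> is antitone in its
  second argument.  So \<open>A(x) \<inter> A(y) = A(x \<and> y)\<close>, and as \<open>A\<close> is injective this identity makes
  \<open>\<and>\<close> associative and commutative.  Conversely, either condition forces \<open>x \<and> y = y \<and> x\<close>.
\<close>

locale weak_bcc =
  fixes X :: "'a set" and m :: "'a \<Rightarrow> 'a \<Rightarrow> 'a" (infixl "\<cdot>" 70) and z :: 'a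
  assumes weak_BCC: "weak_BCC X m z"
begin

abbreviation le :: "'a \<Rightarrow> 'a \<Rightarrow> bool" (infix "\<preceq>" 50)
  where "x \<preceq> y \<equiv> x \<cdot> y = z"

lemma zero_mem: "z \<in> X"
  using weak_BCC unfolding weak_BCC_def by blast

lemma op_closed: "x \<in> X \<Longrightarrow> y \<in> X \<Longrightarrow> x \<cdot> y \<in> X"
  using weak_BCC unfolding weak_BCC_def by blast

lemma bcc_axiom: "x \<in> X \<Longrightarrow> y \<in> X \<Longrightarrow> w \<in> X \<Longrightarrow> (x \<cdot> y) \<cdot> (w \<cdot> y) \<preceq> x \<cdot> w"
  using weak_BCC unfolding weak_BCC_def by blast

lemma le_refl: "x \<in> X \<Longrightarrow> x \<preceq> x"
  using weak_BCC unfolding weak_BCC_def by blast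

lemma op_zero_right: "x \<in> X \<Longrightarrow> x \<cdot> z = x"
  using weak_BCC unfolding weak_BCC_def by blast

lemma le_antisym: "x \<in> X \<Longrightarrow> y \<in> X \<Longrightarrow> x \<preceq> y \<Longrightarrow> y \<preceq> x \<Longrightarrow> x = y"
  using weak_BCC unfolding weak_BCC_def by blast

lemma op_mono_left:
  assumes "x \<in> X" "y \<in> X" "w \<in> X" "x \<preceq> y"
  shows "x \<cdot> w \<preceq> y \<cdot> w"
  using bcc_axiom[of x w y] assms op_zero_right op_closed by simp

lemma le_trans:
  assumes "x \<in> X" "y \<in> X" "w \<in> X" "x \<preceq> y" "y \<preceq> w"
  shows "x \<preceq> w"
  using op_mono_left[OF assms(1-4)] assms(5) op_zero_right[OF op_closed[OF assms(1,3)]] by simp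

lemma op_antitone_right:
  assumes "x \<in> X" "y \<in> X" "w \<in> X" "x \<preceq> y"
  shows "w \<cdot> y \<preceq> w \<cdot> x"
  using bcc_axiom[of w y x] assms op_zero_right op_closed by simp

lemma zero_op_of_common_lower_bound:
  assumes "a \<in> X" "x \<in> X" "y \<in> X" "a \<preceq> x" "a \<preceq> y"
  shows "z \<cdot> (x \<cdot> y) = z"
  using bcc_axiom[of a y x] assms op_zero_right[OF op_closed[OF zero_mem op_closed]] by simp

lemma base_le: "x \<in> X \<Longrightarrow> z \<cdot> (z \<cdot> x) \<preceq> x"
  using bcc_axiom[of x x z] zero_mem le_refl op_zero_right by simp

lemma base_minimal:
  assumes "x \<in> X" "v \<in> X" "v \<preceq> z \<cdot> (z \<cdot> x)"
  shows "v = z \<cdot> (z \<cdot> x)"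
proof -
  have base: "z \<cdot> (z \<cdot> x) \<in> X"
    using op_closed zero_mem assms(1) by blast
  have "v \<preceq> x"
    using le_trans[OF assms(2) base assms(1) assms(3) base_le[OF assms(1)]] .
  then have "z \<cdot> (z \<cdot> x) \<preceq> v"
    using bcc_axiom[of v x z] assms zero_mem op_zero_right by simp
  then show ?thesis
    using le_antisym[OF assms(2) base assms(3)] by simp
qed

lemma base_mem_minimal_elems: "x \<in> X \<Longrightarrow> z \<cdot> (z \<cdot> x) \<in> minimal_elems X m z"
  unfolding minimal_elems_def bcc_le_def using base_minimal op_closed zero_mem by blast

lemma same_branch_if_le:
  assumes "u \<in> X" "y \<in> X" "u \<preceq> y"
  shows "same_branch X m z u y"
proof -
  let ?b = "z \<cdot> (z \<cdot> u)"
  have "?b \<preceq> y"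
    using le_trans[OF _ assms(1,2) base_le[OF assms(1)] assms(3)] op_closed zero_mem assms(1)
    by blast
  then show ?thesis
    unfolding same_branch_def branch_def bcc_le_def
    using base_mem_minimal_elems base_le assms by blast
qed

lemma same_branch_sym: "same_branch X m z x y \<Longrightarrow> same_branch X m z y x"
  unfolding same_branch_def by blast

lemma same_branch_mem: "same_branch X m z x y \<Longrightarrow> x \<in> X \<and> y \<in> X"
  unfolding same_branch_def branch_def by blast

lemma minimal_op_annihilated:
  assumes a: "a \<in> minimal_elems X m z" and "u \<in> X" "z \<cdot> u = z"
  shows "a \<cdot> u = a"
proof -
  have "a \<in> X"
    using a unfolding minimal_elems_def by blast
  then have "a \<cdot> u \<preceq> a"
    using op_antitone_right[OF zero_mem assms(2) _ assms(3)] op_zero_right by metis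
  then show ?thesis
    using a op_closed \<open>a \<in> X\<close> \<open>u \<in> X\<close> unfolding minimal_elems_def bcc_le_def by blast
qed

lemma meet_mem_branch:
  assumes a: "a \<in> minimal_elems X m z" and "x \<in> branch X m z a" "y \<in> branch X m z a"
  shows "bcc_meet m x y \<in> branch X m z a"
proof -
  have "a \<in> X" using a unfolding minimal_elems_def by blast
  have "x \<in> X" "a \<preceq> x" "y \<in> X" "a \<preceq> y"
    using assms(2,3) unfolding branch_def bcc_le_def by auto
  have "y \<cdot> x \<in> X" using op_closed \<open>x \<in> X\<close> \<open>y \<in> X\<close> by blast
  have "a \<cdot> (y \<cdot> x) = a"
    using minimal_op_annihilated[OF a \<open>y \<cdot> x \<in> X\<close>
        zero_op_of_common_lower_bound[OF \<open>a \<in> X\<close> \<open>y \<in> X\<close> \<open>x \<in> X\<close> \<open>a \<preceq> y\<close> \<open>a \<preceq> x\<close>]] .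
  moreover have "(a \<cdot> (y \<cdot> x)) \<cdot> (y \<cdot> (y \<cdot> x)) \<preceq> a \<cdot> y"
    using bcc_axiom[OF \<open>a \<in> X\<close> \<open>y \<cdot> x \<in> X\<close> \<open>y \<in> X\<close>] .
  ultimately have "a \<preceq> y \<cdot> (y \<cdot> x)"
    using \<open>a \<preceq> y\<close> op_zero_right[OF op_closed[OF \<open>a \<in> X\<close> op_closed[OF \<open>y \<in> X\<close> \<open>y \<cdot> x \<in> X\<close>]]]
    by simp
  then show ?thesis
    unfolding branch_def bcc_le_def bcc_meet_def using op_closed \<open>x \<in> X\<close> \<open>y \<in> X\<close> by blast
qed

lemma initial_part_inj:
  assumes "p \<in> X" "q \<in> X" "initial_part X m z p = initial_part X m z q"
  shows "p = q"
proof (rule le_antisym[OF assms(1,2)])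
  have "p \<in> initial_part X m z p" "q \<in> initial_part X m z q"
    using assms(1,2) le_refl unfolding initial_part_def bcc_le_def by auto
  then show "p \<preceq> q" "q \<preceq> p"
    using assms(3) unfolding initial_part_def bcc_le_def by auto
qed

lemma initial_part_meet_imp_branchwise_commutative:
  assumes "\<forall>x\<in>X. \<forall>y\<in>X. same_branch X m z x y \<longrightarrow>
             initial_part X m z x \<inter> initial_part X m z y = initial_part X m z (bcc_meet m x y)"
  shows "branchwise_commutative X m z"
  unfolding branchwise_commutative_def
proof (intro ballI impI)
  fix x y assume "x \<in> X" "y \<in> X" and sb: "same_branch X m z x y"
  have "initial_part X m z (bcc_meet m x y) = initial_part X m z x \<inter> initial_part X m z y"
    using assms \<open>x \<in> X\<close> \<open>y \<in> X\<close> sb by simp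
  also have "\<dots> = initial_part X m z (bcc_meet m y x)"
    using assms \<open>x \<in> X\<close> \<open>y \<in> X\<close> same_branch_sym[OF sb] by (metis Int_commute)
  finally have "bcc_meet m x y = bcc_meet m y x"
    using initial_part_inj op_closed \<open>x \<in> X\<close> \<open>y \<in> X\<close> unfolding bcc_meet_def by simp
  then show "x \<cdot> (x \<cdot> y) = y \<cdot> (y \<cdot> x)"
    unfolding bcc_meet_def by simp
qed

lemma semilattice_branches_imp_branchwise_commutative:
  assumes "\<forall>a\<in>minimal_elems X m z. semilattice_on (branch X m z a) (bcc_meet m)"
  shows "branchwise_commutative X m z"
  unfolding branchwise_commutative_def
proof (intro ballI impI)
  fix x y assume "same_branch X m z x y"
  then obtain a where "a \<in> minimal_elems X m z" "x \<in> branch X m z a" "y \<in> branch X m z a"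
    unfolding same_branch_def by blast
  then have "bcc_meet m y x = bcc_meet m x y"
    using assms unfolding semilattice_on_def by blast
  then show "x \<cdot> (x \<cdot> y) = y \<cdot> (y \<cdot> x)"
    unfolding bcc_meet_def .
qed

end

locale solid_bcc = weak_bcc +
  assumes exchange:
    "x \<in> X \<Longrightarrow> y \<in> X \<Longrightarrow> w \<in> X \<Longrightarrow> same_branch X m z x y \<Longrightarrow> (x \<cdot> y) \<cdot> w = (x \<cdot> w) \<cdot> y"
begin

lemma op_op_self: "x \<in> X \<Longrightarrow> w \<in> X \<Longrightarrow> (x \<cdot> w) \<cdot> x = z \<cdot> w"
  using exchange[of x x w] same_branch_if_le[of x x] le_refl[of x] by simp

lemma meet_le_right:
  assumes "same_branch X m z x y"
  shows "bcc_meet m x y \<preceq> y"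
proof -
  obtain a where a: "a \<in> minimal_elems X m z" "x \<in> branch X m z a" "y \<in> branch X m z a"
    using assms unfolding same_branch_def by blast
  have "a \<in> X" using a(1) unfolding minimal_elems_def by blast
  have "x \<in> X" "a \<preceq> x" "y \<in> X" "a \<preceq> y"
    using a(2,3) unfolding branch_def bcc_le_def by auto
  have "(y \<cdot> (y \<cdot> x)) \<cdot> y = z \<cdot> (y \<cdot> x)"
    using op_op_self[OF \<open>y \<in> X\<close> op_closed[OF \<open>y \<in> X\<close> \<open>x \<in> X\<close>]] .
  also have "\<dots> = z"
    using zero_op_of_common_lower_bound[OF \<open>a \<in> X\<close> \<open>y \<in> X\<close> \<open>x \<in> X\<close> \<open>a \<preceq> y\<close> \<open>a \<preceq> x\<close>] .
  finally show ?thesis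
    unfolding bcc_meet_def .
qed

lemma branchwise_commutative_imp_initial_part_meet:
  assumes bc: "branchwise_commutative X m z" and sb: "same_branch X m z x y"
  shows "initial_part X m z x \<inter> initial_part X m z y = initial_part X m z (bcc_meet m x y)"
proof
  have "x \<in> X" "y \<in> X" using same_branch_mem[OF sb] by auto
  have "bcc_meet m x y \<in> X"
    unfolding bcc_meet_def using op_closed \<open>x \<in> X\<close> \<open>y \<in> X\<close> by blast
  have "bcc_meet m x y = bcc_meet m y x"
    using bc sb \<open>x \<in> X\<close> \<open>y \<in> X\<close> unfolding branchwise_commutative_def bcc_meet_def by metis
  then have "bcc_meet m x y \<preceq> x"
    using meet_le_right[OF same_branch_sym[OF sb]] by simp
  moreover have "bcc_meet m x y \<preceq> y"
    using meet_le_right[OF sb] .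
  ultimately show "initial_part X m z (bcc_meet m x y) \<subseteq> initial_part X m z x \<inter> initial_part X m z y"
    using le_trans[OF _ \<open>bcc_meet m x y \<in> X\<close>] \<open>x \<in> X\<close> \<open>y \<in> X\<close>
    unfolding initial_part_def bcc_le_def by blast
next
  show "initial_part X m z x \<inter> initial_part X m z y \<subseteq> initial_part X m z (bcc_meet m x y)"
  proof
    fix u assume "u \<in> initial_part X m z x \<inter> initial_part X m z y"
    then have "u \<in> X" "u \<preceq> x" "u \<preceq> y"
      unfolding initial_part_def bcc_le_def by auto
    have "x \<in> X" "y \<in> X" using same_branch_mem[OF sb] by auto
    have "u \<cdot> (u \<cdot> y) = y \<cdot> (y \<cdot> u)"
      using bc same_branch_if_le[OF \<open>u \<in> X\<close> \<open>y \<in> X\<close> \<open>u \<preceq> y\<close>] \<open>u \<in> X\<close> \<open>y \<in> X\<close>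
      unfolding branchwise_commutative_def by blast
    then have "u = y \<cdot> (y \<cdot> u)"
      using \<open>u \<preceq> y\<close> op_zero_right[OF \<open>u \<in> X\<close>] by simp
    moreover have "y \<cdot> (y \<cdot> u) \<preceq> y \<cdot> (y \<cdot> x)"
      using op_antitone_right[OF op_closed op_closed \<open>y \<in> X\<close>
          op_antitone_right[OF \<open>u \<in> X\<close> \<open>x \<in> X\<close> \<open>y \<in> X\<close> \<open>u \<preceq> x\<close>]]
        \<open>u \<in> X\<close> \<open>x \<in> X\<close> \<open>y \<in> X\<close> by blast
    ultimately show "u \<in> initial_part X m z (bcc_meet m x y)"
      using \<open>u \<in> X\<close> unfolding initial_part_def bcc_le_def bcc_meet_def by simp
  qed
qed

lemma branchwise_commutative_imp_semilattice_branch: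
  assumes bc: "branchwise_commutative X m z" and a: "a \<in> minimal_elems X m z"
  shows "semilattice_on (branch X m z a) (bcc_meet m)"
proof -
  let ?B = "branch X m z a" and ?A = "initial_part X m z" and ?meet = "bcc_meet m"
  have in_X: "x \<in> X" if "x \<in> ?B" for x
    using that unfolding branch_def by blast
  have sb: "same_branch X m z x y" if "x \<in> ?B" "y \<in> ?B" for x y
    using a that unfolding same_branch_def by blast
  have closed: "?meet x y \<in> ?B" if "x \<in> ?B" "y \<in> ?B" for x y
    using meet_mem_branch[OF a that] .
  have A_meet: "?A (?meet x y) = ?A x \<inter> ?A y" if "x \<in> ?B" "y \<in> ?B" for x y
    using branchwise_commutative_imp_initial_part_meet[OF bc sb[OF that]] by simp
  have assoc: "?meet (?meet x y) w = ?meet x (?meet y w)" if "x \<in> ?B" "y \<in> ?B" "w \<in> ?B" for x y w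
  proof (rule initial_part_inj[OF in_X in_X])
    show "?meet (?meet x y) w \<in> ?B" "?meet x (?meet y w) \<in> ?B"
      using closed that by blast+
    show "?A (?meet (?meet x y) w) = ?A (?meet x (?meet y w))"
      using A_meet closed that by (simp add: Int_assoc)
  qed
  have idem: "?meet x x = x" if "x \<in> ?B" for x
    using le_refl[OF in_X[OF that]] op_zero_right[OF in_X[OF that]] unfolding bcc_meet_def by simp
  have comm: "?meet x y = ?meet y x" if "x \<in> ?B" "y \<in> ?B" for x y
    using bc sb[OF that] in_X[OF that(1)] in_X[OF that(2)]
    unfolding branchwise_commutative_def bcc_meet_def by metis
  show ?thesis
    unfolding semilattice_on_def using closed idem comm assoc by blast
qed

end

theorem theorem3p7:
  fixes X :: "'a set" and m :: "'a \<Rightarrow> 'a \<Rightarrow> 'a" and z :: 'a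
  assumes "solid X m z"
  shows "(branchwise_commutative X m z
            \<longleftrightarrow> (\<forall>a\<in>minimal_elems X m z. semilattice_on (branch X m z a) (bcc_meet m)))
       \<and> (branchwise_commutative X m z
            \<longleftrightarrow> (\<forall>x\<in>X. \<forall>y\<in>X. same_branch X m z x y \<longrightarrow>
                   initial_part X m z x \<inter> initial_part X m z y
                     = initial_part X m z (bcc_meet m x y)))"
proof -
  interpret solid_bcc X m z
    using assms unfolding solid_def by unfold_locales blast+
  show ?thesis
    using branchwise_commutative_imp_semilattice_branch
      semilattice_branches_imp_branchwise_commutative
      branchwise_commutative_imp_initial_part_meet
      initial_part_meet_imp_branchwise_commutative
    by blast
qed

end
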